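(* Consider the pLSI topic model and asymptotic framework described in the context, and let $\mathcal{S}_K^*$ be the population simplex with vertices $v_1^*,\dots,v_K^*$. There exist constants $C_1,C_2>1$, not depending on $n,p,N$, such that, as $n,p,N\to\infty$ (i.e. for all sufficiently large $n,p,N$), $C_1^{-1}\le\|v_k^*-v_\ell^*\|\le C_1$ for all $1\le k\ne\ell\le K$, and $C_2^{-1}\le\mathrm{vol}(\mathcal{S}_K^* )\le C_2$, where $\mathrm{vol}$ is the $(K-1)$-dimensional volume.
   Context: Model. $K\ge2$ is fixed. $A=[A_1,\dots,A_K]\in\mathbb{R}^{p\times K}$ has nonnegative entries, each column summing to $1$; its rows $a_j^T$ are all nonzero. $W=[W_1,\dots,W_n]\in\mathbb{R}^{K\times n}$ is non-random with nonnegative entries, each column summing to $1$. $D_0=AW=[d_1^0,\dots,d_n^0]$. Each document has $N$ words and $D=D_0+Z$, where $Z=[Z_1,\dots,Z_n]$ has independent columns with $Z_i=N^{-1}(X_i-E[X_i])$, $X_i\sim\mathrm{Multinomial}(N,d_i^0)$. Identifiability: for each topic $k$ there is at least one anchor word $j$ (i.e. $A(j,k)\neq0$ and $A(j,\ell)=0$ for $\ell\neq k$) and at least one pure document $i$ (i.e. $W_i=e_k$, the $k$-th standard basis vector). Asymptotic framework: $n,p,N\to\infty$ with $K$ fixed; with $\Sigma_A=A^TA$ and $\Sigma_W=n^{-1}WW^T$, there is a fixed nonnegative, nonsingular, irreducible $K\times K$ matrix $\Sigma_0$ and a sequence $\beta_p>0$ with $\beta_p^{-1}\Sigma_A\to\Sigma_0$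 as $p\to\infty$; and there are constants $c_1,c_2>0$ with $\lambda_{\min}(\Sigma_W)\ge c_1$ and $\lambda_1(\tilde\Sigma_W)-\lambda_2(\tilde\Sigma_W)\ge c_2$, where $\tilde\Sigma_W=\Sigma_0^{1/2}\Sigma_W\Sigma_0^{1/2}$ and $\lambda_k(M)$ is the $k$-th largest eigenvalue of $M$. Population simplex. Let $\xi_1,\dots,\xi_K$ be the left singular vectors of $D_0$ for its $K$ largest singular values (in decreasing order), $\Xi=[\xi_1,\dots,\xi_K]$, and let $V=[V_1,\dots,V_K]\in\mathbb{R}^{K\times K}$ satisfy $\Xi=AV$; signs are taken so that $\xi_1$ and $V_1$ have positive entries (it is part of the setting that these ratios are well defined). Define $V^*\in\mathbb{R}^{K\times(K-1)}$ by $V^*(j,k)=V_{k+1}(j)/V_1(j)$; its rows $v_1^*,\dots,v_K^*\in\mathbb{R}^{K-1}$ are the vertices of the simplex $\mathcal{S}_K^*$. *)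

theory Defs
  imports "HOL-Analysis.Analysis" "HOL-Library.Option_ord"
begin

(* Topics are indexed by the finite type 'd option (K = CARD('d) + 1 >= 2);
   None is the first index. R^(K-1) is real^'d. *)

definition eigpair :: "real^'n^'n \<Rightarrow> real \<Rightarrow> real^'n \<Rightarrow> bool" where
  "eigpair M lam x \<longleftrightarrow> x \<noteq> 0 \<and> M *v x = lam *\<^sub>R x"

definition lambda_min_ge :: "real^'n^'n \<Rightarrow> real \<Rightarrow> bool" where
  "lambda_min_ge M c \<longleftrightarrow> (\<forall>lam x. eigpair M lam x \<longrightarrow> c \<le> lam)"

(* lambda_1(M) - lambda_2(M) >= c for a symmetric matrix M (eigenvalues counted with
   multiplicity): the top eigenvalue lam1 has an eigenvector u, and all eigenvalues on
   the orthogonal complement of u are at most lam1 - c *)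
definition eig_gap_ge :: "real^'n^'n \<Rightarrow> real \<Rightarrow> bool" where
  "eig_gap_ge M c \<longleftrightarrow> (\<exists>lam1 u. eigpair M lam1 u \<and>
      (\<forall>lam x. eigpair M lam x \<and> x \<bullet> u = 0 \<longrightarrow> lam \<le> lam1 - c))"

definition psd :: "real^'n^'n \<Rightarrow> bool" where
  "psd M \<longleftrightarrow> transpose M = M \<and> (\<forall>x. 0 \<le> x \<bullet> (M *v x))"

definition mat_sqrt :: "real^'n^'n \<Rightarrow> real^'n^'n" where
  "mat_sqrt M = (THE R. psd R \<and> R ** R = M)"

definition irreducible_mat :: "real^'n^'n \<Rightarrow> bool" where
  "irreducible_mat M \<longleftrightarrow> (\<forall>i j. (i, j) \<in> {(a, b). M $ a $ b \<noteq> 0}\<^sup>+)"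

(* A : p x K (rows j < p), W : K x n (columns i < n) *)
definition plsi_model ::
  "nat \<Rightarrow> nat \<Rightarrow> (nat \<Rightarrow> 'k::finite \<Rightarrow> real) \<Rightarrow> ('k \<Rightarrow> nat \<Rightarrow> real) \<Rightarrow> bool" where
  "plsi_model p n A W \<longleftrightarrow>
     (\<forall>j<p. \<forall>k. 0 \<le> A j k) \<and> (\<forall>k. (\<Sum>j<p. A j k) = 1) \<and>
     (\<forall>j<p. \<exists>k. A j k \<noteq> 0) \<and>
     (\<forall>i<n. \<forall>k. 0 \<le> W k i) \<and> (\<forall>i<n. (\<Sum>k\<in>UNIV. W k i) = 1) \<and>
     (\<forall>k. \<exists>j<p. A j k \<noteq> 0 \<and> (\<forall>l. l \<noteq> k \<longrightarrow> A j l = 0)) \<and>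
     (\<forall>k. \<exists>i<n. \<forall>l. W l i = (if l = k then 1 else 0))"

definition D0 :: "(nat \<Rightarrow> 'k::finite \<Rightarrow> real) \<Rightarrow> ('k \<Rightarrow> nat \<Rightarrow> real) \<Rightarrow> nat \<Rightarrow> nat \<Rightarrow> real" where
  "D0 A W j i = (\<Sum>k\<in>UNIV. A j k * W k i)"

definition Sigma_A :: "nat \<Rightarrow> (nat \<Rightarrow> 'k::finite \<Rightarrow> real) \<Rightarrow> real^'k^'k" where
  "Sigma_A p A = (\<chi> k l. \<Sum>j<p. A j k * A j l)"

definition Sigma_W :: "nat \<Rightarrow> ('k::finite \<Rightarrow> nat \<Rightarrow> real) \<Rightarrow> real^'k^'k" where
  "Sigma_W n W = (\<chi> k l. (\<Sum>i<n. W k i * W l i) / real n)"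

(* Xi = [xi_1..xi_K] are left singular vectors of D0 for its K largest singular values
   s (decreasing, index None first), Xi = A V, and xi_1, V_1 have positive entries *)
definition pop_simplex_data ::
  "nat \<Rightarrow> nat \<Rightarrow> (nat \<Rightarrow> 'd::{finite,linorder} option \<Rightarrow> real) \<Rightarrow> ('d option \<Rightarrow> nat \<Rightarrow> real)
   \<Rightarrow> (nat \<Rightarrow> 'd option \<Rightarrow> real) \<Rightarrow> ('d option \<Rightarrow> real) \<Rightarrow> ('d option \<Rightarrow> 'd option \<Rightarrow> real) \<Rightarrow> bool" where
  "pop_simplex_data p n A W Xi s V \<longleftrightarrow>
     (let G = (\<lambda>j j'. \<Sum>i<n. D0 A W j i * D0 A W j' i) in
     (\<forall>c c'. (\<Sum>j<p. Xi j c * Xi j c') = (if c = c' then 1 else 0)) \<and>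
     (\<forall>c. 0 \<le> s c) \<and>
     (\<forall>c. \<forall>j<p. (\<Sum>j'<p. G j j' * Xi j' c) = (s c)\<^sup>2 * Xi j c) \<and>
     (\<forall>c c'. c \<le> c' \<longrightarrow> s c' \<le> s c) \<and>
     (\<forall>x lam. (\<exists>j<p. x j \<noteq> 0) \<and> (\<forall>j<p. (\<Sum>j'<p. G j j' * x j') = lam * x j) \<and>
              (\<forall>c. (\<Sum>j<p. x j * Xi j c) = 0) \<longrightarrow> (\<forall>c. lam \<le> (s c)\<^sup>2)) \<and>
     (\<forall>j<p. \<forall>c. Xi j c = (\<Sum>t\<in>UNIV. A j t * V t c)) \<and>
     (\<forall>j<p. 0 < Xi j None) \<and> (\<forall>t. 0 < V t None))"

definition vstar :: "('d::finite option \<Rightarrow> 'd option \<Rightarrow> real) \<Rightarrow> 'd option \<Rightarrow> real^'d" where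
  "vstar V t = (\<chi> d. V t (Some d) / V t None)"

end

theory Submission
  imports Defs
begin

text \<open>Orthonormality of \<open>\<Xi> = A V\<close> means \<open>V\<^sup>T \<Sigma>\<^sub>A V = I\<close>, and \<open>\<Sigma>\<^sub>A / \<beta>\<^sub>p \<rightarrow> \<Sigma>\<^sub>0\<close> with
  \<open>\<Sigma>\<^sub>0\<close> positive definite, so \<open>\<surd>\<beta>\<^sub>p V\<close> is uniformly well conditioned. An anchor word of
  topic \<open>k\<close> turns the eigen-equation \<open>D\<^sub>0 D\<^sub>0\<^sup>T \<xi>\<^sub>1 = s\<^sub>1\<^sup>2 \<xi>\<^sub>1\<close> into \<open>W W\<^sup>T \<Sigma>\<^sub>A V\<^sub>1 = s\<^sub>1\<^sup>2 V\<^sub>1\<close>;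
  since \<open>\<lambda>\<^sub>m\<^sub>i\<^sub>n(\<Sigma>\<^sub>W) \<ge> c\<^sub>1\<close> and \<open>\<Sigma>\<^sub>0\<close> is irreducible, this Perron eigenvector has
  uniformly bounded entry ratios (a Harnack inequality along the graph of \<open>\<Sigma>\<^sub>0\<close>). Dividing
  the rows of \<open>V\<close> by \<open>V\<^sub>1\<close> therefore distorts lengths by bounded factors only: every
  combination \<open>\<Sum>\<^sub>t \<alpha>\<^sub>t v\<^sub>t\<^sup>*\<close> with \<open>\<Sum>\<^sub>t \<alpha>\<^sub>t = 0\<close> has norm comparable to \<open>|\<alpha>|\<close>, and all
  vertices are bounded.\<close>

lemma sum_UNIV_option:
  "(\<Sum>t\<in>(UNIV::'a::finite option set). f t) = f None + (\<Sum>d\<in>UNIV. f (Some d))"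
proof -
  have "(\<Sum>t\<in>insert None (range Some). f t) = f None + (\<Sum>t\<in>range Some. f t)"
    by (subst sum.insert) auto
  also have "(\<Sum>t\<in>range Some. f t) = (\<Sum>d\<in>UNIV. f (Some d))"
    by (subst sum.reindex) (auto simp: inj_on_def)
  finally show ?thesis by (simp add: UNIV_option_conv[symmetric])
qed

lemma power2_norm_vec: "(norm (x::real^'n))\<^sup>2 = (\<Sum>i\<in>UNIV. (x$i)\<^sup>2)"
  by (simp add: power2_norm_eq_inner inner_vec_def power2_eq_square[symmetric])

lemma norm_matrix_vector_le_entries:
  fixes M :: "real^'k::finite^'k"
  assumes "\<And>k l. \<bar>M$k$l\<bar> \<le> c k l"
  shows "norm (M *v w) \<le> (\<Sum>k\<in>UNIV. \<Sum>l\<in>UNIV. c k l) * norm w"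
proof -
  have "\<bar>(M *v w)$k\<bar> \<le> (\<Sum>l\<in>UNIV. c k l * norm w)" for k
  proof -
    have "\<bar>(M *v w)$k\<bar> \<le> (\<Sum>l\<in>UNIV. \<bar>M$k$l\<bar> * \<bar>w$l\<bar>)"
      unfolding matrix_vector_mult_def abs_mult[symmetric] by (simp add: sum_abs)
    also have "\<dots> \<le> (\<Sum>l\<in>UNIV. c k l * norm w)"
      by (intro sum_mono mult_mono assms component_le_norm_cart)
        (auto intro: order_trans[OF abs_ge_zero assms])
    finally show ?thesis .
  qed
  then have "norm (M *v w) \<le> (\<Sum>k\<in>UNIV. \<Sum>l\<in>UNIV. c k l * norm w)"
    by (intro order_trans[OF norm_le_l1_cart] sum_mono)
  then show ?thesis by (simp add: sum_distrib_right)
qed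

lemma sum_swap3:
  "(\<Sum>a\<in>A. \<Sum>b\<in>B. \<Sum>c\<in>C. f a b c) = (\<Sum>c\<in>C. \<Sum>b\<in>B. \<Sum>a\<in>A. f a b c)"
proof -
  have "(\<Sum>a\<in>A. \<Sum>b\<in>B. \<Sum>c\<in>C. f a b c) = (\<Sum>b\<in>B. \<Sum>a\<in>A. \<Sum>c\<in>C. f a b c)"
    by (rule sum.swap)
  also have "\<dots> = (\<Sum>b\<in>B. \<Sum>c\<in>C. \<Sum>a\<in>A. f a b c)"
    by (rule sum.cong[OF refl sum.swap])
  also have "\<dots> = (\<Sum>c\<in>C. \<Sum>b\<in>B. \<Sum>a\<in>A. f a b c)"
    by (rule sum.swap)
  finally show ?thesis .
qed

section \<open>Quadratic forms and the smallest eigenvalue\<close>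

definition quad_form :: "real^'n^'n \<Rightarrow> real^'n \<Rightarrow> real" where
  "quad_form S v = v \<bullet> (S *v v)"

lemma quad_form_expand: "quad_form M w = (\<Sum>k\<in>UNIV. \<Sum>l\<in>UNIV. w$k * M$k$l * w$l)"
  by (simp add: quad_form_def inner_vec_def matrix_vector_mult_def sum_distrib_left mult_ac)

lemma quad_form_scaleR_vector: "quad_form S (c *\<^sub>R v) = c\<^sup>2 * quad_form S v"
  by (simp add: quad_form_def matrix_vector_mult_scaleR power2_eq_square)

lemma quad_form_scaleR_matrix: "quad_form (c *\<^sub>R M) v = c * quad_form M v"
  by (simp add: quad_form_def scaleR_matrix_vector_assoc[symmetric])

lemma quad_form_add_symmetric:
  assumes "transpose S = S"
  shows "quad_form S (w + t *\<^sub>R v) = quad_form S w + 2 * t * (v \<bullet> (S *v w)) + t\<^sup>2 * quad_form S v"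
proof -
  have "w \<bullet> (S *v v) = (transpose S *v w) \<bullet> v"
    by (simp add: dot_lmul_matrix)
  then have "w \<bullet> (S *v v) = v \<bullet> (S *v w)"
    using assms by (simp add: inner_commute)
  then show ?thesis
    unfolding quad_form_def
    by (simp add: matrix_vector_right_distrib matrix_vector_mult_scaleR inner_add_left inner_add_right
        power2_eq_square algebra_simps)
qed

lemma abs_quad_form_diff_le:
  fixes M N :: "real^'k::finite^'k"
  assumes "\<And>k l. \<bar>M$k$l - N$k$l\<bar> \<le> \<epsilon>"
  shows "\<bar>quad_form M w - quad_form N w\<bar> \<le> (real CARD('k))\<^sup>2 * \<epsilon> * (norm w)\<^sup>2"
proof -
  have "quad_form M w - quad_form N w = (\<Sum>k\<in>UNIV. \<Sum>l\<in>UNIV. w$k * (M$k$l - N$k$l) * w$l)"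
    by (simp add: quad_form_expand sum_subtractf[symmetric] algebra_simps)
  also have "\<bar>\<dots>\<bar> \<le> (\<Sum>k\<in>UNIV. \<Sum>l\<in>UNIV. \<bar>w$k * (M$k$l - N$k$l) * w$l\<bar>)"
    by (rule order_trans[OF sum_abs sum_mono[OF sum_abs]])
  also have "\<dots> = (\<Sum>k\<in>UNIV. \<Sum>l\<in>UNIV. \<bar>M$k$l - N$k$l\<bar> * (\<bar>w$k\<bar> * \<bar>w$l\<bar>))"
    by (simp add: abs_mult mult_ac)
  also have "\<dots> \<le> (\<Sum>k\<in>(UNIV::'k set). \<Sum>l\<in>(UNIV::'k set). \<epsilon> * (norm w * norm w))"
    by (intro sum_mono mult_mono assms component_le_norm_cart)
      (auto intro: order_trans[OF abs_ge_zero assms])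
  also have "\<dots> = (real CARD('k))\<^sup>2 * \<epsilon> * (norm w)\<^sup>2"
    by (simp add: power2_eq_square)
  finally show ?thesis .
qed

lemma quadratic_nonneg_imp_linear_coeff_zero:
  fixes c d :: real
  assumes "\<And>t. 0 \<le> 2 * t * c + t\<^sup>2 * d"
  shows "c = 0"
proof (rule ccontr)
  assume "c \<noteq> 0"
  define r where "r = 1 / (\<bar>d\<bar> + 1)"
  have r: "0 < r" "r * \<bar>d\<bar> < 1"
    by (simp_all add: r_def)
  have "2 * (- c * r) * c + (- c * r)\<^sup>2 * d \<le> 2 * (- c * r) * c + (- c * r)\<^sup>2 * \<bar>d\<bar>"
    by (intro add_left_mono mult_left_mono) auto
  also have "\<dots> = c\<^sup>2 * r * (r * \<bar>d\<bar> - 2)"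
    by (simp add: power2_eq_square algebra_simps)
  also have "\<dots> < 0"
    using \<open>c \<noteq> 0\<close> r by (intro mult_pos_neg) auto
  finally show False
    using assms[of "- c * r"] by simp
qed

text \<open>The minimum of the quadratic form on the unit sphere is attained at an eigenvector:
  first-order optimality along every direction \<open>v\<close> forces \<open>S w - \<mu> w \<bottom> v\<close>.\<close>

lemma symmetric_min_eigenvector_exists:
  fixes S :: "real^'k::finite^'k"
  assumes sym: "transpose S = S"
  shows "\<exists>w. norm w = 1 \<and> (\<forall>v. quad_form S w * (norm v)\<^sup>2 \<le> quad_form S v) \<and>
    S *v w = quad_form S w *\<^sub>R w"
proof -
  have cont: "continuous_on (sphere 0 1) (quad_form S)"
    unfolding quad_form_def
    by (intro continuous_intros linear_continuous_on matrix_vector_mul_linear bounded_linear_inner_right)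
  have "sphere (0::real^'k) 1 \<noteq> {}"
    using norm_axis_1[of undefined] by (metis mem_sphere_0 empty_iff)
  then obtain w where w: "w \<in> sphere 0 1"
    and wmin: "\<And>y. y \<in> sphere 0 1 \<Longrightarrow> quad_form S w \<le> quad_form S y"
    using continuous_attains_inf[OF compact_sphere _ cont] by blast
  define \<mu> where "\<mu> = quad_form S w"
  have nw: "norm w = 1" and ww: "w \<bullet> w = 1"
    using w by (simp_all add: norm_eq_1)
  have global: "\<mu> * (norm v)\<^sup>2 \<le> quad_form S v" for v
  proof (cases "v = 0")
    case False
    then have "\<mu> \<le> quad_form S ((1 / norm v) *\<^sub>R v)"
      unfolding \<mu>_def by (intro wmin) simp
    also have "\<dots> = quad_form S v / (norm v)\<^sup>2"
      by (simp add: quad_form_scaleR_vector power_divide)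
    finally show ?thesis
      using False by (simp add: pos_le_divide_eq)
  qed (simp add: quad_form_def)
  have "v \<bullet> (S *v w - \<mu> *\<^sub>R w) = 0" for v
  proof (rule quadratic_nonneg_imp_linear_coeff_zero)
    fix t
    have "(norm (w + t *\<^sub>R v))\<^sup>2 = w \<bullet> w + 2 * t * (v \<bullet> w) + t\<^sup>2 * (v \<bullet> v)"
      unfolding power2_norm_eq_inner
      by (simp add: inner_add_left inner_add_right inner_commute power2_eq_square algebra_simps)
    then have "(norm (w + t *\<^sub>R v))\<^sup>2 = 1 + 2 * t * (v \<bullet> w) + t\<^sup>2 * (norm v)\<^sup>2"
      by (simp add: ww power2_norm_eq_inner)
    then show "0 \<le> 2 * t * (v \<bullet> (S *v w - \<mu> *\<^sub>R w)) + t\<^sup>2 * (quad_form S v - \<mu> * (norm v)\<^sup>2)"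
      using global[of "w + t *\<^sub>R v"] quad_form_add_symmetric[OF sym, of w t v]
      by (simp add: \<mu>_def inner_diff_right algebra_simps)
  qed
  from this[of "S *v w - \<mu> *\<^sub>R w"] have "S *v w = \<mu> *\<^sub>R w"
    by simp
  then show ?thesis
    using nw global by (auto simp: \<mu>_def)
qed

lemma lambda_min_ge_le_diag:
  fixes S :: "real^'k::finite^'k"
  assumes sym: "transpose S = S" and "lambda_min_ge S c"
  shows "c \<le> S$k$k"
proof -
  obtain w where "norm w = 1" and min: "\<And>v. quad_form S w * (norm v)\<^sup>2 \<le> quad_form S v"
    and "S *v w = quad_form S w *\<^sub>R w"
    using symmetric_min_eigenvector_exists[OF sym] by blast
  then have "eigpair S (quad_form S w) w"
    by (auto simp: eigpair_def)
  then have "c \<le> quad_form S w"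
    using assms(2) by (auto simp: lambda_min_ge_def)
  also have "\<dots> \<le> quad_form S (axis k 1)"
    using min[of "axis k 1"] by simp
  also have "\<dots> = S$k$k"
    by (simp add: quad_form_def matrix_vector_mult_basis column_def inner_axis')
  finally show ?thesis .
qed

lemma psd_invertible_imp_coercive:
  fixes S :: "real^'k::finite^'k"
  assumes sym: "transpose S = S" and psd: "\<And>v. 0 \<le> quad_form S v" and "invertible S"
  shows "\<exists>a>0. \<forall>v. a * (norm v)\<^sup>2 \<le> quad_form S v"
proof -
  obtain w where "norm w = 1" and min: "\<And>v. quad_form S w * (norm v)\<^sup>2 \<le> quad_form S v"
    and eig: "S *v w = quad_form S w *\<^sub>R w"
    using symmetric_min_eigenvector_exists[OF sym] by blast
  obtain S' where "S' ** S = mat 1"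
    using \<open>invertible S\<close> invertible_def by blast
  then have "S *v w \<noteq> 0"
    using \<open>norm w = 1\<close> by (metis matrix_vector_mul_assoc matrix_vector_mul_lid
        matrix_vector_mult_0_right norm_zero zero_neq_one)
  then have "0 < quad_form S w"
    using eig psd[of w] by fastforce
  then show ?thesis
    using min by blast
qed

section \<open>Matrices normalised by \<open>V\<^sup>T M V = I\<close>\<close>

lemma congruence_right_inverse:
  fixes V M :: "real^'k::finite^'k"
  assumes "transpose V ** M ** V = mat 1"
  shows "M ** V ** transpose V = mat 1"
proof -
  have "transpose V ** (M ** V) = mat 1"
    using assms by (simp add: matrix_mul_assoc)
  then show ?thesis
    using matrix_left_right_inverse by blast
qed

lemma congruence_quad_form_column:
  fixes V M :: "real^'k::finite^'k"
  assumes "transpose V ** M ** V = mat 1"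
  shows "quad_form M (V *v e) = e \<bullet> e"
proof -
  have "quad_form M (V *v e) = e \<bullet> (transpose V *v (M *v (V *v e)))"
    unfolding quad_form_def by (metis dot_lmul_matrix transpose_matrix_vector transpose_transpose)
  also have "transpose V *v (M *v (V *v e)) = e"
    using assms by (simp add: matrix_vector_mul_assoc matrix_mul_assoc)
  finally show ?thesis .
qed

lemma congruence_norm_transpose_bounds:
  fixes V M :: "real^'k::finite^'k" and u :: "real^'k"
  assumes VMV: "transpose V ** M ** V = mat 1"
    and "0 < a"
    and lo: "\<And>w. a * (norm w)\<^sup>2 \<le> quad_form M w"
    and up: "\<And>w. norm (M *v w) \<le> b * norm w"
  shows "a * (norm u)\<^sup>2 \<le> b\<^sup>2 * (norm (transpose V *v u))\<^sup>2"
    and "a * (norm (transpose V *v u))\<^sup>2 \<le> (norm u)\<^sup>2"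
proof -
  define g where "g = transpose V *v u"
  define w where "w = V *v g"
  have u: "u = M *v w"
    using congruence_right_inverse[OF VMV] unfolding w_def g_def
    by (metis matrix_vector_mul_assoc matrix_vector_mul_lid)
  have "g \<bullet> g = u \<bullet> w"
    unfolding w_def g_def by (simp add: dot_lmul_matrix)
  then have gg: "g \<bullet> g = quad_form M w"
    unfolding quad_form_def by (simp add: u inner_commute)
  have "a * (norm u)\<^sup>2 \<le> a * (b * norm w)\<^sup>2"
    using up[of w] u \<open>0 < a\<close> by (intro mult_left_mono power_mono) auto
  also have "\<dots> = b\<^sup>2 * (a * (norm w)\<^sup>2)"
    by (simp add: power_mult_distrib)
  also have "\<dots> \<le> b\<^sup>2 * (g \<bullet> g)"
    using lo[of w] gg by (intro mult_left_mono) auto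
  finally show "a * (norm u)\<^sup>2 \<le> b\<^sup>2 * (norm (transpose V *v u))\<^sup>2"
    by (simp add: g_def power2_norm_eq_inner)
  have cs: "quad_form M w \<le> norm w * norm u"
    unfolding quad_form_def u[symmetric] by (rule norm_cauchy_schwarz)
  have aw: "a * norm w \<le> norm u"
  proof (cases "w = 0")
    case False
    then show ?thesis
      using order_trans[OF lo[of w] cs] by (simp add: power2_eq_square mult.assoc)
  qed (simp add: u)
  have "a * (g \<bullet> g) \<le> norm u * (a * norm w)"
    using gg cs \<open>0 < a\<close> by (simp add: mult_left_mono mult_ac)
  also have "\<dots> \<le> norm u * norm u"
    using aw by (intro mult_left_mono) auto
  finally show "a * (norm (transpose V *v u))\<^sup>2 \<le> (norm u)\<^sup>2"
    by (metis g_def power2_eq_square power2_norm_eq_inner)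
qed

lemma congruence_column_norm_bounds:
  fixes V M :: "real^'k::finite^'k"
  assumes VMV: "transpose V ** M ** V = mat 1"
    and lo: "\<And>w. a * (norm w)\<^sup>2 \<le> quad_form M w"
    and up: "\<And>w. norm (M *v w) \<le> b * norm w"
  shows "a * (norm (column c V))\<^sup>2 \<le> 1" and "1 \<le> b * (norm (column c V))\<^sup>2" and "0 < b"
proof -
  define x where "x = column c V"
  have Qx: "quad_form M x = 1"
    using congruence_quad_form_column[OF VMV, of "axis c 1"]
    by (simp add: x_def matrix_vector_mult_basis)
  then show "a * (norm (column c V))\<^sup>2 \<le> 1"
    using lo[of x] by (simp add: x_def)
  have "1 \<le> norm x * norm (M *v x)"
    using Qx norm_cauchy_schwarz[of x "M *v x"] by (simp add: quad_form_def)
  also have "\<dots> \<le> norm x * (b * norm x)"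
    using up[of x] by (intro mult_left_mono) auto
  finally show b: "1 \<le> b * (norm (column c V))\<^sup>2"
    by (simp add: x_def power2_eq_square mult_ac)
  show "0 < b"
  proof (rule ccontr)
    assume "\<not> 0 < b"
    then have "b * (norm (column c V))\<^sup>2 \<le> 0"
      by (simp add: mult_nonpos_nonneg)
    with b show False
      by simp
  qed
qed

definition affinely_separated :: "real \<Rightarrow> ('k::finite \<Rightarrow> 'a::real_normed_vector) \<Rightarrow> bool" where
  "affinely_separated \<sigma> vs \<longleftrightarrow>
     (\<forall>\<alpha>::real^'k. (\<Sum>t\<in>UNIV. \<alpha>$t) = 0 \<longrightarrow> \<sigma> * norm \<alpha> \<le> norm (\<Sum>t\<in>UNIV. \<alpha>$t *\<^sub>R vs t))"

text \<open>For \<open>\<Sum>\<^sub>t \<alpha>\<^sub>t = 0\<close> the vector \<open>V\<^sup>T (\<alpha>\<^sub>t / V\<^sub>t\<^sub>1)\<^sub>t\<close> has first entry \<open>0\<close> and remaining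
  entries \<open>\<Sum>\<^sub>t \<alpha>\<^sub>t v\<^sub>t\<^sup>*\<close>.\<close>

lemma congruence_vstar_affinely_separated:
  fixes V :: "'d::finite option \<Rightarrow> 'd option \<Rightarrow> real" and M :: "real^'d option^'d option"
  assumes VMV: "transpose (\<chi> t c. V t c) ** M ** (\<chi> t c. V t c) = mat 1"
    and "0 < a"
    and lo: "\<And>w. a * (norm w)\<^sup>2 \<le> quad_form M w"
    and up: "\<And>w. norm (M *v w) \<le> b * norm w"
    and pos: "\<And>t. 0 < V t None"
  shows "affinely_separated (a / b) (vstar V)"
  unfolding affinely_separated_def
proof (intro allI impI)
  fix \<alpha> :: "real^'d option"
  assume sum0: "(\<Sum>t\<in>UNIV. \<alpha>$t) = 0"
  define Vm where "Vm = (\<chi> t c. V t c)"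
  define u where "u = (\<chi> t. \<alpha>$t / V t None)"
  define g where "g = transpose Vm *v u"
  define y where "y = (\<Sum>t\<in>UNIV. \<alpha>$t *\<^sub>R vstar V t)"
  have g: "g$c = (\<Sum>t\<in>UNIV. V t c * (\<alpha>$t / V t None))" for c
    unfolding g_def u_def Vm_def by (simp add: vector_matrix_mult_def mult.commute)
  have "V t None \<noteq> 0" for t
    using pos[of t] by simp
  then have "g$None = 0" "g$(Some d) = y$d" for d
    using sum0 by (simp_all add: g y_def vstar_def sum_component field_simps)
  then have ng: "(norm g)\<^sup>2 = (norm y)\<^sup>2"
    by (simp add: power2_norm_vec sum_UNIV_option)
  have col: "a * (V t None)\<^sup>2 \<le> 1" for t
  proof -
    have "(V t None)\<^sup>2 \<le> (norm (column None Vm))\<^sup>2"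
      using power_mono[OF component_le_norm_cart[of "column None Vm" t], of 2]
      by (simp add: Vm_def column_def)
    then show ?thesis
      using congruence_column_norm_bounds(1)[OF VMV[folded Vm_def] lo up, of None] \<open>0 < a\<close>
      by (meson less_imp_le mult_left_mono order_trans)
  qed
  have "a * (\<alpha>$t)\<^sup>2 \<le> (u$t)\<^sup>2" for t
    using mult_left_mono[OF col[of t], of "(\<alpha>$t)\<^sup>2"] pos[of t]
    by (simp add: u_def power_divide pos_le_divide_eq mult_ac)
  then have "a * (norm \<alpha>)\<^sup>2 \<le> (norm u)\<^sup>2"
    by (simp add: power2_norm_vec sum_distrib_left sum_mono)
  then have "a * (a * (norm \<alpha>)\<^sup>2) \<le> b\<^sup>2 * (norm g)\<^sup>2"
    using congruence_norm_transpose_bounds(1)[OF VMV[folded Vm_def] \<open>0 < a\<close> lo up, of u] \<open>0 < a\<close>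
    unfolding g_def by (meson mult_left_mono order_trans less_imp_le)
  then have "(a * norm \<alpha>)\<^sup>2 \<le> (b * norm y)\<^sup>2"
    unfolding ng by (simp add: power_mult_distrib power2_eq_square mult_ac)
  moreover have "0 < b"
    by (rule congruence_column_norm_bounds(3)[OF VMV[folded Vm_def] lo up])
  ultimately have "a * norm \<alpha> \<le> b * norm y"
    by (meson power2_le_imp_le less_imp_le mult_nonneg_nonneg norm_ge_zero)
  then show "a / b * norm \<alpha> \<le> norm y"
    using \<open>0 < b\<close> by (simp add: pos_divide_le_eq mult.commute)
qed

lemma congruence_norm_vstar_le:
  fixes V :: "'d::finite option \<Rightarrow> 'd option \<Rightarrow> real" and M :: "real^'d option^'d option"
  assumes VMV: "transpose (\<chi> t c. V t c) ** M ** (\<chi> t c. V t c) = mat 1"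
    and "0 < a"
    and lo: "\<And>w. a * (norm w)\<^sup>2 \<le> quad_form M w"
    and up: "\<And>w. norm (M *v w) \<le> b * norm w"
    and pos: "\<And>t. 0 < V t None"
    and ratio: "\<And>k l. V l None \<le> R * V k None"
  shows "norm (vstar V k) \<le> R * sqrt (real CARD('d option) * b / a)"
proof -
  define Vm where "Vm = (\<chi> t c. V t c)"
  define K where "K = real CARD('d option)"
  define g where "g = transpose Vm *v axis k 1"
  have "0 < b"
    by (rule congruence_column_norm_bounds(3)[OF VMV[folded Vm_def] lo up])
  have g: "g$c = V k c" for c
    by (simp add: g_def Vm_def matrix_vector_mult_basis column_transpose row_def)
  have "(norm (vstar V k))\<^sup>2 * (V k None)\<^sup>2 = (\<Sum>d\<in>UNIV. (V k (Some d))\<^sup>2)"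
    using pos[of k]
    by (simp add: power2_norm_vec vstar_def power_divide sum_divide_distrib[symmetric])
  then have "(norm (vstar V k))\<^sup>2 * (V k None)\<^sup>2 \<le> (norm g)\<^sup>2"
    by (simp add: power2_norm_vec sum_UNIV_option g)
  moreover have "a * (norm g)\<^sup>2 \<le> 1"
    using congruence_norm_transpose_bounds(2)[OF VMV[folded Vm_def] \<open>0 < a\<close> lo up, of "axis k 1"]
    by (simp add: g_def)
  ultimately have "a * (norm (vstar V k))\<^sup>2 * (V k None)\<^sup>2 \<le> 1"
    using \<open>0 < a\<close> by (metis mult.assoc mult_left_mono order_trans less_imp_le)
  have "0 < R"
    using ratio[of k k] pos[of k] by (simp add: mult_le_cancel_right1)
  have "(V l None)\<^sup>2 \<le> R\<^sup>2 * (V k None)\<^sup>2" for l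
    using power_mono[OF ratio[of l k], of 2] pos[of l] by (simp add: power_mult_distrib)
  then have "(norm (column None Vm))\<^sup>2 \<le> K * R\<^sup>2 * (V k None)\<^sup>2"
    using sum_mono[of UNIV "\<lambda>l. (V l None)\<^sup>2" "\<lambda>_. R\<^sup>2 * (V k None)\<^sup>2"]
    by (simp add: power2_norm_vec Vm_def column_def K_def mult.assoc)
  then have "b * (norm (column None Vm))\<^sup>2 \<le> b * (K * R\<^sup>2 * (V k None)\<^sup>2)"
    using \<open>0 < b\<close> by simp
  then have "1 \<le> b * K * R\<^sup>2 * (V k None)\<^sup>2"
    using congruence_column_norm_bounds(2)[OF VMV[folded Vm_def] lo up, of None]
    by (simp add: mult.assoc)
  with \<open>a * (norm (vstar V k))\<^sup>2 * (V k None)\<^sup>2 \<le> 1\<close> have "a * (norm (vstar V k))\<^sup>2 \<le> b * K * R\<^sup>2"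
    using pos[of k] by (meson mult_le_cancel_right_pos order_trans zero_less_power)
  then have "(norm (vstar V k))\<^sup>2 \<le> (R * sqrt (K * b / a))\<^sup>2"
    using \<open>0 < a\<close> \<open>0 < b\<close> by (simp add: power_mult_distrib pos_le_divide_eq K_def mult_ac)
  then show ?thesis
    unfolding K_def
    by (rule power2_le_imp_le)
      (use \<open>0 < R\<close> \<open>0 < a\<close> \<open>0 < b\<close> in simp)
qed

section \<open>Edges and volume of a well-separated simplex\<close>

lemma affinely_separated_norm_diff_ge:
  fixes vs :: "'k::finite \<Rightarrow> 'a::real_normed_vector"
  assumes sep: "affinely_separated \<sigma> vs" and "0 \<le> \<sigma>" and "k \<noteq> l"
  shows "\<sigma> \<le> norm (vs k - vs l)"
proof -
  define \<alpha> where "\<alpha> = (axis k 1 - axis l 1 :: real^'k)"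
  have "1 \<le> norm \<alpha>"
    using component_le_norm_cart[of \<alpha> k] \<open>k \<noteq> l\<close> by (simp add: \<alpha>_def axis_def)
  then have "\<sigma> * 1 \<le> \<sigma> * norm \<alpha>"
    using \<open>0 \<le> \<sigma>\<close> by (rule mult_left_mono)
  also have "\<dots> \<le> norm (\<Sum>t\<in>UNIV. \<alpha>$t *\<^sub>R vs t)"
  proof -
    have "(\<Sum>t\<in>UNIV. \<alpha>$t) = 0"
      by (simp add: \<alpha>_def axis_def sum_subtractf)
    then show ?thesis
      using sep unfolding affinely_separated_def by blast
  qed
  also have "(\<Sum>t\<in>UNIV. \<alpha>$t *\<^sub>R vs t) = vs k - vs l"
    by (simp add: \<alpha>_def axis_def scaleR_left_diff_distrib sum_subtractf if_distrib[of "\<lambda>x. x *\<^sub>R _"] cong: if_cong)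
  finally show ?thesis
    by simp
qed

lemma measure_convex_hull_le_cball:
  fixes vs :: "'k::finite \<Rightarrow> 'a::euclidean_space" and B :: real
  assumes "\<And>t. norm (vs t) \<le> B"
  shows "measure lborel (convex hull (range vs)) \<le> measure lborel (cball (0::'a) B)"
proof (rule measure_mono_fmeasurable)
  show "convex hull range vs \<subseteq> cball 0 B"
    by (rule hull_minimal) (use assms in \<open>auto simp: convex_cball\<close>)
  show "convex hull range vs \<in> sets lborel"
    by (intro fmeasurableD fmeasurable_compact compact_convex_hull finite_imp_compact) auto
qed (intro fmeasurable_compact compact_cball)

lemma affinely_separated_edge_map_ge:
  fixes vs :: "'d::finite option \<Rightarrow> 'a::real_normed_vector"
  assumes "affinely_separated \<sigma> vs" and "0 \<le> \<sigma>"
  shows "\<sigma> * norm z \<le> norm (\<Sum>d\<in>UNIV. z$d *\<^sub>R (vs (Some d) - vs None))"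
proof -
  define \<alpha> :: "real^'d option"
    where "\<alpha> = (\<chi> t. case t of None \<Rightarrow> - (\<Sum>d\<in>UNIV. z$d) | Some d \<Rightarrow> z$d)"
  have "norm z \<le> norm \<alpha>"
    by (rule power2_le_imp_le) (simp_all add: power2_norm_vec sum_UNIV_option \<alpha>_def)
  then have "\<sigma> * norm z \<le> \<sigma> * norm \<alpha>"
    using \<open>0 \<le> \<sigma>\<close> by (rule mult_left_mono)
  also have "\<dots> \<le> norm (\<Sum>t\<in>UNIV. \<alpha>$t *\<^sub>R vs t)"
  proof -
    have "(\<Sum>t\<in>UNIV. \<alpha>$t) = 0"
      by (simp add: \<alpha>_def sum_UNIV_option)
    then show ?thesis
      using assms(1) unfolding affinely_separated_def by blast
  qed
  also have "(\<Sum>t\<in>UNIV. \<alpha>$t *\<^sub>R vs t) = (\<Sum>d\<in>UNIV. z$d *\<^sub>R (vs (Some d) - vs None))"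
    by (simp add: \<alpha>_def sum_UNIV_option scaleR_diff_right sum_subtractf scaleR_sum_left)
  finally show ?thesis .
qed

lemma card_option_barycentre_bound:
  "real CARD('d::finite) * (1 / real CARD('d option) + 1 / (real CARD('d option))\<^sup>2) \<le> 1"
proof -
  define K where "K = real CARD('d option)"
  have K: "real CARD('d) = K - 1" "1 < K"
    by (simp_all add: K_def card_UNIV_option)
  then have "real CARD('d) * (1 / K + 1 / K\<^sup>2) = (K\<^sup>2 - 1) / K\<^sup>2"
    unfolding K(1) by (simp add: field_simps power2_eq_square)
  also have "\<dots> \<le> 1"
    using K(2) by (simp add: divide_le_eq_1)
  finally show ?thesis
    by (simp add: K_def)
qed

text \<open>A point at distance \<open>< \<sigma>/K\<^sup>2\<close> from the barycentre has barycentric coordinates within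
  \<open>1/K\<^sup>2\<close> of \<open>1/K\<close>, hence nonnegative.\<close>

lemma affinely_separated_ball_subset_convex_hull:
  fixes vs :: "'d::finite option \<Rightarrow> real^'d"
  assumes sep: "affinely_separated \<sigma> vs" and "0 < \<sigma>"
  shows "\<exists>y0. ball y0 (\<sigma> / (real CARD('d option))\<^sup>2) \<subseteq> convex hull (range vs)"
proof -
  define K where "K = real CARD('d option)"
  define r where "r = 1 / K\<^sup>2"
  define L where "L z = (\<Sum>d\<in>UNIV. z$d *\<^sub>R (vs (Some d) - vs None))" for z :: "real^'d"
  have "linear L"
    unfolding L_def by (rule linearI)
      (simp_all add: sum.distrib scaleR_add_left scaleR_right.sum scaleR_sum_right)
  have L_ge: "\<sigma> * norm z \<le> norm (L z)" for z
    unfolding L_def using affinely_separated_edge_map_ge[OF sep] \<open>0 < \<sigma>\<close> by simp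
  have "inj L"
  proof (rule injI)
    fix z z' assume "L z = L z'"
    then have "\<sigma> * norm (z - z') \<le> 0"
      using L_ge[of "z - z'"] linear_diff[OF \<open>linear L\<close>] by simp
    then show "z = z'"
      using \<open>0 < \<sigma>\<close> by (simp add: mult_le_0_iff)
  qed
  then have "surj L"
    using linear_injective_imp_surjective[OF \<open>linear L\<close>] by simp
  define c :: "real^'d" where "c = (\<chi> d. 1 / K)"
  have "ball (vs None + L c) (\<sigma> * r) \<subseteq> convex hull (range vs)"
  proof
    fix y assume y: "y \<in> ball (vs None + L c) (\<sigma> * r)"
    obtain z where z: "L z = y - vs None"
      using \<open>surj L\<close> by (metis surjD)
    have "\<sigma> * norm (z - c) \<le> norm (y - (vs None + L c))"
      using L_ge[of "z - c"] linear_diff[OF \<open>linear L\<close>] z by (simp add: algebra_simps)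
    also have "\<dots> < \<sigma> * r"
      using y by (simp add: dist_norm norm_minus_commute)
    finally have "norm (z - c) < r"
      using \<open>0 < \<sigma>\<close> by simp
    then have zd: "\<bar>z$d - 1 / K\<bar> < r" for d
      using component_le_norm_cart[of "z - c" d] by (simp add: c_def)
    have "r \<le> 1 / K"
      by (simp add: r_def K_def power2_eq_square divide_simps)
    then have z0: "0 \<le> z$d" for d
      using zd[of d] by linarith
    have "(\<Sum>d\<in>UNIV. z$d) \<le> (\<Sum>d\<in>(UNIV::'d set). 1 / K + r)"
      by (rule sum_mono) (use zd in \<open>smt (verit)\<close>)
    also have "\<dots> \<le> 1"
      using card_option_barycentre_bound[where 'd='d] by (simp add: r_def K_def)
    finally have zs: "(\<Sum>d\<in>UNIV. z$d) \<le> 1" .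
    define w where "w t = (case t of None \<Rightarrow> 1 - (\<Sum>d\<in>UNIV. z$d) | Some d \<Rightarrow> z$d)" for t
    have "(\<Sum>t\<in>UNIV. w t *\<^sub>R vs t) \<in> convex hull (range vs)"
      by (rule convex_sum) (use z0 zs in \<open>auto simp: w_def sum_UNIV_option hull_inc
          convex_convex_hull split: option.split\<close>)
    moreover have "(\<Sum>t\<in>UNIV. w t *\<^sub>R vs t) = vs None + L z"
      by (simp add: w_def sum_UNIV_option L_def scaleR_diff_right sum_subtractf scaleR_diff_left
          scaleR_sum_left)
    ultimately show "y \<in> convex hull (range vs)"
      using z by simp
  qed
  then show ?thesis
    by (auto simp: r_def K_def)
qed

lemma affinely_separated_measure_convex_hull_ge:
  fixes vs :: "'d::finite option \<Rightarrow> real^'d"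
  assumes "affinely_separated \<sigma> vs" and "0 < \<sigma>"
  shows "measure lborel (ball (0::real^'d) (\<sigma> / (real CARD('d option))\<^sup>2))
    \<le> measure lborel (convex hull (range vs))"
proof -
  define \<rho> where "\<rho> = \<sigma> / (real CARD('d option))\<^sup>2"
  have "0 < \<rho>"
    using \<open>0 < \<sigma>\<close> by (simp add: \<rho>_def)
  obtain y0 where sub: "ball y0 \<rho> \<subseteq> convex hull (range vs)"
    using affinely_separated_ball_subset_convex_hull[OF assms] by (auto simp: \<rho>_def)
  have "measure lborel (ball (0::real^'d) \<rho>) = measure lborel (ball y0 \<rho>)"
    using content_ball_conv_unit_ball[OF less_imp_le[OF \<open>0 < \<rho>\<close>], of y0]
      content_ball_conv_unit_ball[OF less_imp_le[OF \<open>0 < \<rho>\<close>], of "0::real^'d"] by simp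
  also have "\<dots> \<le> measure lborel (convex hull (range vs))"
    by (intro measure_mono_fmeasurable[OF sub] fmeasurable_compact compact_convex_hull
        finite_imp_compact) auto
  finally show ?thesis
    by (simp add: \<rho>_def)
qed

section \<open>Positive eigenvectors of nonnegative matrices\<close>

lemma nonneg_eigvec_entry_le:
  fixes Q :: "'k::finite \<Rightarrow> 'k \<Rightarrow> real"
  assumes "(\<Sum>u\<in>UNIV. Q k u * x u) = lam * x k"
    and "\<And>u. 0 \<le> Q k u" and "\<And>u. 0 \<le> x u"
  shows "Q k l * x l \<le> lam * x k"
  using member_le_sum[of l UNIV "\<lambda>u. Q k u * x u"] assms by simp

lemma pos_eigvec_eigenvalue_le:
  fixes Q :: "'k::finite \<Rightarrow> 'k \<Rightarrow> real"
  assumes eig: "\<And>k. (\<Sum>u\<in>UNIV. Q k u * x u) = lam * x k"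
    and Q: "\<And>k u. 0 \<le> Q k u" and pos: "\<And>u. 0 < x u"
    and rows: "\<And>k. (\<Sum>u\<in>UNIV. Q k u) \<le> B"
  shows "lam \<le> B"
proof -
  have "Max (range x) \<in> range x"
    by (rule Max_in) auto
  then obtain k where k: "x k = Max (range x)"
    by (metis imageE)
  then have "x u \<le> x k" for u
    by simp
  then have "lam * x k \<le> (\<Sum>u\<in>UNIV. Q k u) * x k"
    unfolding eig[symmetric] sum_distrib_right by (intro sum_mono mult_left_mono Q)
  also have "\<dots> \<le> B * x k"
    using rows[of k] pos[of k] by (simp add: mult_right_mono)
  finally show ?thesis
    using pos[of k] by simp
qed

lemma ratio_le_pow_of_ntrancl:
  fixes x :: "'k \<Rightarrow> real"
  assumes edge: "\<And>a b. (a, b) \<in> E \<Longrightarrow> x b \<le> \<rho> * x a" and "1 \<le> \<rho>" and pos: "\<And>t. 0 < x t"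
  shows "(k, l) \<in> ntrancl n E \<Longrightarrow> x l \<le> \<rho> ^ Suc n * x k"
proof (induction n arbitrary: l)
  case 0
  then show ?case
    using edge by simp
next
  case (Suc n)
  then obtain j where kj: "(k, j) \<in> ntrancl n E" and jl: "(j, l) \<in> Id \<union> E"
    by auto
  have "x l \<le> \<rho> * x j"
    using jl edge \<open>1 \<le> \<rho>\<close> pos[of j] by auto
  also have "\<dots> \<le> \<rho> * (\<rho> ^ Suc n * x k)"
    using Suc.IH[OF kj] \<open>1 \<le> \<rho>\<close> by simp
  finally show ?case
    by simp
qed

lemma ratio_le_pow_card_of_strongly_connected:
  fixes x :: "'k::finite \<Rightarrow> real"
  assumes "\<And>a b. (a, b) \<in> E \<Longrightarrow> x b \<le> \<rho> * x a" and "1 \<le> \<rho>" and "\<And>t. 0 < x t"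
    and conn: "\<And>i j. (i, j) \<in> E\<^sup>+"
  shows "x l \<le> \<rho> ^ card E * x k"
proof -
  have "finite E"
    by (rule finite_subset[of _ UNIV]) auto
  moreover have "E \<noteq> {}"
    using conn[of k k] by auto
  ultimately have card: "Suc (card E - 1) = card E"
    by (simp add: card_gt_0_iff)
  have "(k, l) \<in> ntrancl (card E - 1) E"
    using conn[of k l] finite_trancl_ntranl[OF \<open>finite E\<close>] by simp
  from ratio_le_pow_of_ntrancl[OF assms(1-3) this] show ?thesis
    by (simp only: card)
qed

section \<open>The pLSI model\<close>

lemma quad_form_Sigma_A: "quad_form (Sigma_A p A) v = (\<Sum>j<p. (\<Sum>k\<in>UNIV. A j k * v$k)\<^sup>2)"
proof -
  have "quad_form (Sigma_A p A) v = (\<Sum>k\<in>UNIV. \<Sum>l\<in>UNIV. \<Sum>j<p. (A j k * v$k) * (A j l * v$l))"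
    by (simp add: quad_form_expand Sigma_A_def sum_distrib_left sum_distrib_right mult_ac)
  also have "\<dots> = (\<Sum>j<p. \<Sum>l\<in>UNIV. \<Sum>k\<in>UNIV. (A j k * v$k) * (A j l * v$l))"
    by (rule sum_swap3)
  also have "\<dots> = (\<Sum>j<p. (\<Sum>k\<in>UNIV. A j k * v$k)\<^sup>2)"
    by (rule sum.cong[OF refl]) (simp add: power2_eq_square sum_product, rule sum.swap)
  finally show ?thesis .
qed

lemma Sigma_A_congruence:
  fixes A :: "nat \<Rightarrow> 'k::finite \<Rightarrow> real" and Xi :: "nat \<Rightarrow> 'k \<Rightarrow> real" and V :: "'k \<Rightarrow> 'k \<Rightarrow> real"
  assumes orth: "\<And>c c'. (\<Sum>j<p. Xi j c * Xi j c') = (if c = c' then 1 else 0)"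
    and XAV: "\<And>j c. j < p \<Longrightarrow> Xi j c = (\<Sum>t\<in>UNIV. A j t * V t c)"
  shows "transpose (\<chi> t c. V t c) ** Sigma_A p A ** (\<chi> t c. V t c) = mat 1"
proof -
  have "(\<Sum>u\<in>UNIV. (\<Sum>t\<in>UNIV. V t c * (\<Sum>j<p. A j t * A j u)) * V u c') = (\<Sum>j<p. Xi j c * Xi j c')"
    for c c'
  proof -
    have "(\<Sum>j<p. Xi j c * Xi j c') = (\<Sum>j<p. \<Sum>t\<in>UNIV. \<Sum>u\<in>UNIV. (A j t * V t c) * (A j u * V u c'))"
      by (simp add: XAV sum_product)
    also have "\<dots> = (\<Sum>u\<in>UNIV. \<Sum>t\<in>UNIV. \<Sum>j<p. (A j t * V t c) * (A j u * V u c'))"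
      by (rule sum_swap3)
    finally show ?thesis
      by (simp add: sum_distrib_left sum_distrib_right mult_ac)
  qed
  then show ?thesis
    by (simp add: matrix_matrix_mult_def Sigma_A_def mat_def vec_eq_iff transpose_def orth)
qed

text \<open>An anchor word \<open>j\<close> of topic \<open>k\<close> turns row \<open>j\<close> of the eigen-equation \<open>D\<^sub>0 D\<^sub>0\<^sup>T \<xi> = s\<^sup>2 \<xi>\<close>
  into row \<open>k\<close> of \<open>W W\<^sup>T \<Sigma>\<^sub>A V = s\<^sup>2 V\<close>.\<close>

lemma anchor_eigen_equation:
  fixes A :: "nat \<Rightarrow> 'k::finite \<Rightarrow> real" and W :: "'k \<Rightarrow> nat \<Rightarrow> real"
    and Xi :: "nat \<Rightarrow> 'k \<Rightarrow> real" and V :: "'k \<Rightarrow> 'k \<Rightarrow> real"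
  assumes eig: "\<And>j. j < p \<Longrightarrow> (\<Sum>j'<p. (\<Sum>i<n. D0 A W j i * D0 A W j' i) * Xi j' c) = lam * Xi j c"
    and XAV: "\<And>j c. j < p \<Longrightarrow> Xi j c = (\<Sum>t\<in>UNIV. A j t * V t c)"
    and anchor: "\<And>k. \<exists>j<p. A j k \<noteq> 0 \<and> (\<forall>l. l \<noteq> k \<longrightarrow> A j l = 0)"
  shows "(\<Sum>u\<in>UNIV. (\<Sum>l\<in>UNIV. (\<Sum>i<n. W k i * W l i) * Sigma_A p A $ l $ u) * V u c) = lam * V k c"
proof -
  define P where "P k l = (\<Sum>i<n. W k i * W l i)" for k l
  define Y where "Y l = (\<Sum>u\<in>UNIV. Sigma_A p A $ l $ u * V u c)" for l
  define \<Phi> where "\<Phi> k = (\<Sum>l\<in>UNIV. P k l * Y l)" for k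
  have Y: "(\<Sum>j<p. A j l * Xi j c) = Y l" for l
  proof -
    have "(\<Sum>j<p. A j l * Xi j c) = (\<Sum>j<p. \<Sum>u\<in>UNIV. A j l * A j u * V u c)"
      by (simp add: XAV sum_distrib_left mult_ac)
    also have "\<dots> = Y l"
      unfolding Y_def Sigma_A_def by (subst sum.swap) (simp add: sum_distrib_right)
    finally show ?thesis .
  qed
  have DXi: "(\<Sum>j'<p. D0 A W j' i * Xi j' c) = (\<Sum>l\<in>UNIV. W l i * Y l)" for i
  proof -
    have "(\<Sum>j'<p. D0 A W j' i * Xi j' c) = (\<Sum>j'<p. \<Sum>l\<in>UNIV. W l i * (A j' l * Xi j' c))"
      by (simp add: D0_def sum_distrib_left sum_distrib_right mult_ac)
    also have "\<dots> = (\<Sum>l\<in>UNIV. W l i * Y l)"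
      by (subst sum.swap) (simp add: Y[symmetric] sum_distrib_left)
    finally show ?thesis .
  qed
  have "(\<Sum>j'<p. (\<Sum>i<n. D0 A W j i * D0 A W j' i) * Xi j' c) = (\<Sum>k\<in>UNIV. A j k * \<Phi> k)" for j
  proof -
    have "(\<Sum>j'<p. (\<Sum>i<n. D0 A W j i * D0 A W j' i) * Xi j' c)
        = (\<Sum>i<n. D0 A W j i * (\<Sum>j'<p. D0 A W j' i * Xi j' c))"
      unfolding sum_distrib_left sum_distrib_right by (simp add: mult_ac) (rule sum.swap)
    also have "\<dots> = (\<Sum>i<n. \<Sum>k\<in>UNIV. A j k * (W k i * (\<Sum>l\<in>UNIV. W l i * Y l)))"
      unfolding DXi by (simp only: D0_def sum_distrib_right mult.assoc)
    also have "\<dots> = (\<Sum>k\<in>UNIV. A j k * \<Phi> k)"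
      by (subst sum.swap) (simp add: \<Phi>_def P_def sum_distrib_left sum_distrib_right mult_ac
          sum.swap[of _ "{..<n}" UNIV])
    finally show ?thesis .
  qed
  moreover obtain j where j: "j < p" "A j k \<noteq> 0" and zero: "\<And>l. l \<noteq> k \<Longrightarrow> A j l = 0"
    using anchor[of k] by blast
  moreover have single: "(\<Sum>l\<in>UNIV. A j l * f l) = A j k * f k" for f :: "'k \<Rightarrow> real"
    by (subst sum.remove[of UNIV k]) (simp_all add: zero)
  ultimately have "A j k * \<Phi> k = A j k * (lam * V k c)"
    using eig[OF j(1)] XAV[OF j(1)] by (simp add: single)
  then have "\<Phi> k = lam * V k c"
    using j(2) by simp
  moreover have "(\<Sum>u\<in>UNIV. (\<Sum>l\<in>UNIV. P k l * Sigma_A p A $ l $ u) * V u c) = \<Phi> k"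
    unfolding \<Phi>_def Y_def sum_distrib_left sum_distrib_right by (subst sum.swap) (simp add: mult.assoc)
  ultimately show ?thesis
    by (simp add: P_def)
qed

definition entry_bound :: "real^'k::finite^'k \<Rightarrow> real" where
  "entry_bound S = (\<Sum>k\<in>UNIV. \<Sum>l\<in>UNIV. \<bar>S$k$l\<bar> + 1)"

text \<open>A bound for the ratio \<open>V\<^sub>l\<^sub>1 / V\<^sub>k\<^sub>1\<close> across each edge \<open>k \<rightarrow> l\<close> of the graph of \<open>S\<close>; a path
  between two topics needs at most as many steps as the graph has edges.\<close>

definition harnack_base :: "real^'k::finite^'k \<Rightarrow> real \<Rightarrow> real" where
  "harnack_base S c =
     1 + (\<Sum>k\<in>UNIV. \<Sum>l\<in>UNIV. if S$k$l \<noteq> 0 then 2 * entry_bound S / (c * S$k$l) else 0)"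

definition harnack_const :: "real^'k::finite^'k \<Rightarrow> real \<Rightarrow> real" where
  "harnack_const S c = harnack_base S c ^ card {(a, b). S$a$b \<noteq> 0}"

lemma entry_bound_pos: "0 < entry_bound S"
  unfolding entry_bound_def by (intro sum_pos) (auto intro: add_nonneg_pos)

lemma quad_form_bounds_near_coercive:
  fixes M S :: "real^'k::finite^'k"
  assumes close: "\<And>k l. \<bar>((1/\<beta>) *\<^sub>R M)$k$l - S$k$l\<bar> \<le> \<epsilon>"
    and "0 < \<beta>" and "\<epsilon> \<le> 1" and "\<epsilon> \<le> a / (2 * (real CARD('k))\<^sup>2)"
    and coercive: "\<And>v. a * (norm v)\<^sup>2 \<le> quad_form S v"
  shows "\<beta> * (a/2) * (norm w)\<^sup>2 \<le> quad_form M w"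
    and "norm (M *v w) \<le> \<beta> * entry_bound S * norm w"
proof -
  have "(real CARD('k))\<^sup>2 * \<epsilon> \<le> a / 2"
    using assms(4) by (simp add: field_simps)
  then have "(real CARD('k))\<^sup>2 * \<epsilon> * (norm w)\<^sup>2 \<le> a / 2 * (norm w)\<^sup>2"
    by (rule mult_right_mono) simp
  then have "a / 2 * (norm w)\<^sup>2 \<le> quad_form ((1/\<beta>) *\<^sub>R M) w"
    using abs_quad_form_diff_le[OF close, of w] coercive[of w] by linarith
  then show "\<beta> * (a/2) * (norm w)\<^sup>2 \<le> quad_form M w"
    using \<open>0 < \<beta>\<close> by (simp add: quad_form_scaleR_matrix field_simps)
  have "\<bar>M$k$l\<bar> \<le> \<beta> * (\<bar>S$k$l\<bar> + 1)" for k l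
  proof -
    have "\<bar>((1/\<beta>) *\<^sub>R M)$k$l\<bar> \<le> \<bar>S$k$l\<bar> + 1"
      using close[of k l] \<open>\<epsilon> \<le> 1\<close> abs_triangle_ineq2[of "((1/\<beta>) *\<^sub>R M)$k$l" "S$k$l"]
      by linarith
    then show ?thesis
      using \<open>0 < \<beta>\<close> by (simp add: abs_mult field_simps)
  qed
  then show "norm (M *v w) \<le> \<beta> * entry_bound S * norm w"
    using norm_matrix_vector_le_entries[of M "\<lambda>k l. \<beta> * (\<bar>S$k$l\<bar> + 1)" w]
    by (simp add: entry_bound_def sum_distrib_left)
qed

lemma harnack_base_bounds:
  fixes S :: "real^'k::finite^'k"
  assumes "\<And>k l. 0 \<le> S$k$l" and "0 < c"
  shows "1 \<le> harnack_base S c" and "S$k$l \<noteq> 0 \<Longrightarrow> 2 * entry_bound S / (c * S$k$l) \<le> harnack_base S c"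
proof -
  define f where "f k l = (if S$k$l \<noteq> 0 then 2 * entry_bound S / (c * S$k$l) else 0)" for k l
  have f: "0 \<le> f k l" for k l
    using assms(1)[of k l] \<open>0 < c\<close> entry_bound_pos[of S] by (simp add: f_def)
  have "f k l \<le> (\<Sum>l'\<in>UNIV. f k l')"
    by (rule member_le_sum) (use f in auto)
  also have "\<dots> \<le> (\<Sum>k'\<in>UNIV. \<Sum>l'\<in>UNIV. f k' l')"
    by (rule member_le_sum[of k UNIV "\<lambda>k'. \<Sum>l'\<in>UNIV. f k' l'"]) (auto intro: sum_nonneg f)
  finally have "f k l \<le> harnack_base S c - 1"
    by (simp add: harnack_base_def f_def)
  then show "S$k$l \<noteq> 0 \<Longrightarrow> 2 * entry_bound S / (c * S$k$l) \<le> harnack_base S c"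
    using f[of k l] by (simp add: f_def)
  show "1 \<le> harnack_base S c"
    using \<open>f k l \<le> harnack_base S c - 1\<close> f[of k l] by simp
qed

lemma plsi_eigen_matrix_bounds:
  fixes A :: "nat \<Rightarrow> 'k::finite \<Rightarrow> real" and W :: "'k \<Rightarrow> nat \<Rightarrow> real" and S :: "real^'k^'k"
  assumes model: "plsi_model p n A W" and "0 < \<beta>" and "1 \<le> n"
    and "lambda_min_ge (Sigma_W n W) c"
    and upper: "\<And>k l. ((1/\<beta>) *\<^sub>R Sigma_A p A)$k$l \<le> \<bar>S$k$l\<bar> + 1"
  defines "Q k u \<equiv> \<Sum>l\<in>UNIV. (\<Sum>i<n. W k i * W l i) * Sigma_A p A $ l $ u"
  shows "0 \<le> Q k u"
    and "(\<Sum>u\<in>UNIV. Q k u) \<le> real n * \<beta> * entry_bound S"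
    and "real n * c * Sigma_A p A $ k $ l \<le> Q k l"
proof -
  define P where "P k l = (\<Sum>i<n. W k i * W l i)" for k l
  have Wnn: "\<And>k i. i < n \<Longrightarrow> 0 \<le> W k i" and Wsum: "\<And>i. i < n \<Longrightarrow> (\<Sum>k\<in>UNIV. W k i) = 1"
    and SA: "\<And>k l. 0 \<le> Sigma_A p A $ k $ l"
    using model unfolding plsi_model_def Sigma_A_def by (auto intro!: sum_nonneg)
  have "W k i \<le> 1" if "i < n" for k i
    using member_le_sum[of k UNIV "\<lambda>k. W k i"] Wnn Wsum that by simp
  then have "P k l \<le> (\<Sum>i<n. 1)" for k l
    unfolding P_def by (intro sum_mono mult_le_one) (auto intro: Wnn)
  then have P: "0 \<le> P k l" "P k l \<le> real n" for k l
    using Wnn by (auto simp: P_def intro: sum_nonneg)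
  show Q: "0 \<le> Q k u" for k u
    unfolding Q_def P_def[symmetric] using P SA by (auto intro: sum_nonneg)
  have "(\<Sum>u\<in>UNIV. Q k u) = (\<Sum>l\<in>UNIV. P k l * (\<Sum>u\<in>UNIV. Sigma_A p A $ l $ u))"
    unfolding Q_def P_def[symmetric] sum_distrib_left by (rule sum.swap)
  also have "\<dots> \<le> (\<Sum>l\<in>UNIV. real n * (\<Sum>u\<in>UNIV. \<beta> * (\<bar>S$l$u\<bar> + 1)))"
  proof (intro sum_mono mult_mono P sum_nonneg SA)
    fix l u
    show "Sigma_A p A $ l $ u \<le> \<beta> * (\<bar>S$l$u\<bar> + 1)"
      using upper[of l u] \<open>0 < \<beta>\<close> by (simp add: field_simps)
  qed simp
  also have "\<dots> = real n * \<beta> * entry_bound S"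
    by (simp add: entry_bound_def sum_distrib_left mult_ac)
  finally show "(\<Sum>u\<in>UNIV. Q k u) \<le> real n * \<beta> * entry_bound S" .
  have "c \<le> Sigma_W n W $ k $ k"
    by (rule lambda_min_ge_le_diag[OF _ assms(4)])
      (simp add: Sigma_W_def transpose_def vec_eq_iff mult.commute)
  then have "real n * c \<le> P k k"
    using \<open>1 \<le> n\<close> by (simp add: Sigma_W_def P_def pos_le_divide_eq mult.commute)
  then have "real n * c * Sigma_A p A $ k $ l \<le> P k k * Sigma_A p A $ k $ l"
    using SA by (rule mult_right_mono)
  also have "\<dots> \<le> Q k l"
    unfolding Q_def P_def[symmetric]
    by (rule member_le_sum[of k UNIV "\<lambda>l'. P k l' * Sigma_A p A $ l' $ l"]) (use P SA in auto)
  finally show "real n * c * Sigma_A p A $ k $ l \<le> Q k l" .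
qed

text \<open>The first column of \<open>V\<close> is a positive eigenvector of \<open>Q = W W\<^sup>T \<Sigma>\<^sub>A\<close>; every edge \<open>k \<rightarrow> l\<close>
  of the graph of \<open>S\<close> bounds \<open>Q\<^sub>k\<^sub>l\<close> from below, hence \<open>V\<^sub>l\<^sub>1 / V\<^sub>k\<^sub>1\<close> from above.\<close>

lemma plsi_first_column_ratio_le:
  fixes A :: "nat \<Rightarrow> 'd::{finite,linorder} option \<Rightarrow> real" and W :: "'d option \<Rightarrow> nat \<Rightarrow> real"
    and S :: "real^'d option^'d option"
  assumes model: "plsi_model p n A W" and data: "pop_simplex_data p n A W Xi s V"
    and "0 < \<beta>" and "1 \<le> n" and "lambda_min_ge (Sigma_W n W) c" and "0 < c"
    and upper: "\<And>k l. ((1/\<beta>) *\<^sub>R Sigma_A p A)$k$l \<le> \<bar>S$k$l\<bar> + 1"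
    and lower: "\<And>k l. S$k$l \<noteq> 0 \<Longrightarrow> S$k$l / 2 \<le> ((1/\<beta>) *\<^sub>R Sigma_A p A)$k$l"
    and S_nonneg: "\<And>k l. 0 \<le> S$k$l" and irr: "irreducible_mat S"
  shows "V l None \<le> harnack_const S c * V k None"
proof -
  define Q where "Q k u = (\<Sum>l\<in>UNIV. (\<Sum>i<n. W k i * W l i) * Sigma_A p A $ l $ u)" for k u
  note Q = plsi_eigen_matrix_bounds[OF model \<open>0 < \<beta>\<close> \<open>1 \<le> n\<close> assms(5) upper, folded Q_def]
  have pos: "\<And>t. 0 < V t None"
    using data unfolding pop_simplex_data_def Let_def by auto
  have eig: "(\<Sum>u\<in>UNIV. Q k u * V u None) = (s None)\<^sup>2 * V k None" for k
    unfolding Q_def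
    by (rule anchor_eigen_equation)
      (use data model in \<open>auto simp: pop_simplex_data_def plsi_model_def Let_def\<close>)
  have lam: "(s None)\<^sup>2 \<le> real n * \<beta> * entry_bound S"
    by (rule pos_eigvec_eigenvalue_le[OF eig Q(1) pos Q(2)])
  have "V l None \<le> harnack_base S c * V k None" if "(k, l) \<in> {(a, b). S$a$b \<noteq> 0}" for k l
  proof -
    have S: "S$k$l \<noteq> 0" "0 < S$k$l"
      using that S_nonneg[of k l] by auto
    have "real n * c * (\<beta> * (S$k$l / 2)) * V l None \<le> Q k l * V l None"
    proof (intro mult_right_mono order_trans[OF _ Q(3)] mult_left_mono)
      show "\<beta> * (S$k$l / 2) \<le> Sigma_A p A $ k $ l"
        using lower[OF S(1)] \<open>0 < \<beta>\<close> by (simp add: field_simps)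
    qed (use \<open>0 < c\<close> pos[of l] in auto)
    also have "\<dots> \<le> (s None)\<^sup>2 * V k None"
      by (rule nonneg_eigvec_entry_le[OF eig Q(1)]) (use pos in \<open>simp add: less_imp_le\<close>)
    also have "\<dots> \<le> real n * \<beta> * entry_bound S * V k None"
      using lam pos[of k] by (simp add: mult_right_mono)
    finally have "V l None \<le> 2 * entry_bound S / (c * S$k$l) * V k None"
      using \<open>0 < \<beta>\<close> \<open>1 \<le> n\<close> \<open>0 < c\<close> S(2) by (simp add: field_simps)
    also have "\<dots> \<le> harnack_base S c * V k None"
      by (rule mult_right_mono)
        (use harnack_base_bounds(2)[OF S_nonneg \<open>0 < c\<close> S(1)] pos[of k] in \<open>simp_all add: less_imp_le\<close>)
    finally show ?thesis .
  qed
  then show ?thesis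
    using ratio_le_pow_card_of_strongly_connected[of "{(a, b). S$a$b \<noteq> 0}" "\<lambda>t. V t None" "harnack_base S c"]
      harnack_base_bounds(1)[OF S_nonneg \<open>0 < c\<close>] pos irr
    by (simp add: harnack_const_def irreducible_mat_def)
qed

lemma plsi_vstar_separated_bounded:
  fixes A :: "nat \<Rightarrow> 'd::{finite,linorder} option \<Rightarrow> real" and W :: "'d option \<Rightarrow> nat \<Rightarrow> real"
    and S :: "real^'d option^'d option"
  assumes model: "plsi_model p n A W" and data: "pop_simplex_data p n A W Xi s V"
    and "0 < \<beta>" and "1 \<le> n" and "lambda_min_ge (Sigma_W n W) c" and "0 < c"
    and close: "\<And>k l. \<bar>((1/\<beta>) *\<^sub>R Sigma_A p A)$k$l - S$k$l\<bar> \<le> \<epsilon>"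
    and "\<epsilon> \<le> 1" and "\<epsilon> \<le> a / (2 * (real CARD('d option))\<^sup>2)"
    and lower: "\<And>k l. S$k$l \<noteq> 0 \<Longrightarrow> S$k$l / 2 \<le> ((1/\<beta>) *\<^sub>R Sigma_A p A)$k$l"
    and "0 < a" and coercive: "\<And>v. a * (norm v)\<^sup>2 \<le> quad_form S v"
    and S_nonneg: "\<And>k l. 0 \<le> S$k$l" and irr: "irreducible_mat S"
  shows "affinely_separated ((a/2) / entry_bound S) (vstar V)"
    and "norm (vstar V k) \<le> harnack_const S c * sqrt (real CARD('d option) * entry_bound S / (a/2))"
proof -
  have VMV: "transpose (\<chi> t c. V t c) ** Sigma_A p A ** (\<chi> t c. V t c) = mat 1"
    by (rule Sigma_A_congruence) (use data in \<open>auto simp: pop_simplex_data_def Let_def\<close>)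
  have pos: "\<And>t. 0 < V t None"
    using data unfolding pop_simplex_data_def Let_def by auto
  note bounds = quad_form_bounds_near_coercive[OF close \<open>0 < \<beta>\<close> assms(8,9) coercive]
  have "0 < \<beta> * (a/2)"
    using \<open>0 < \<beta>\<close> \<open>0 < a\<close> by simp
  note separated = congruence_vstar_affinely_separated[OF VMV this bounds pos]
    and bounded = congruence_norm_vstar_le[OF VMV this bounds pos]
  show "affinely_separated ((a/2) / entry_bound S) (vstar V)"
    using separated \<open>0 < \<beta>\<close> by simp
  have "\<bar>((1/\<beta>) *\<^sub>R Sigma_A p A)$k$l\<bar> \<le> \<bar>S$k$l\<bar> + 1" for k l
    using close[of k l] \<open>\<epsilon> \<le> 1\<close> abs_triangle_ineq2[of "((1/\<beta>) *\<^sub>R Sigma_A p A)$k$l" "S$k$l"]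
    by linarith
  then have "V l None \<le> harnack_const S c * V k None" for k l
    by (intro plsi_first_column_ratio_le[OF model data \<open>0 < \<beta>\<close> \<open>1 \<le> n\<close> assms(5,6) _ lower
          S_nonneg irr]) (auto intro: order_trans[OF abs_ge_self])
  from bounded[OF this, of k] show "norm (vstar V k)
      \<le> harnack_const S c * sqrt (real CARD('d option) * entry_bound S / (a/2))"
    using \<open>0 < \<beta>\<close> by (simp add: mult.assoc)
qed

section \<open>Asymptotics\<close>

lemma limit_Sigma_A_symmetric_psd:
  assumes lim: "(\<lambda>m. (1 / beta (p m)) *\<^sub>R Sigma_A (p m) (A m)) \<longlonglongrightarrow> S"
    and beta_pos: "\<And>q. 0 < beta q"
  shows "transpose S = S" and "0 \<le> quad_form S v"
proof -
  define M where "M m = (1 / beta (p m)) *\<^sub>R Sigma_A (p m) (A m)" for m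
  have M: "(\<lambda>m. M m $ k $ l) \<longlonglongrightarrow> S $ k $ l" for k l
    unfolding M_def by (intro tendsto_vec_nth lim)
  have "M m $ k $ l = M m $ l $ k" for m k l
    by (simp add: M_def Sigma_A_def mult.commute)
  then have "S $ l $ k = S $ k $ l" for k l
    using LIMSEQ_unique[OF M[of l k]] M[of k l] by simp
  then show "transpose S = S"
    by (simp add: transpose_def vec_eq_iff)
  have "(\<lambda>m. quad_form (M m) v) \<longlonglongrightarrow> quad_form S v"
    unfolding quad_form_expand by (intro tendsto_sum tendsto_mult tendsto_const M)
  moreover have "0 \<le> quad_form (M m) v" for m
    using beta_pos[of "p m"] by (simp add: M_def quad_form_scaleR_matrix quad_form_Sigma_A sum_nonneg)
  ultimately show "0 \<le> quad_form S v"
    by (intro tendsto_le[OF trivial_limit_sequentially _ tendsto_const]) auto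
qed

lemma eventually_entries_close:
  fixes M :: "nat \<Rightarrow> real^'k::finite^'k"
  assumes "M \<longlonglongrightarrow> S" and "0 < \<epsilon>"
  shows "\<forall>\<^sub>F m in sequentially. \<forall>k l. \<bar>M m $ k $ l - S $ k $ l\<bar> \<le> \<epsilon>"
proof (intro eventually_all_finite)
  fix k l
  have "\<forall>\<^sub>F m in sequentially. dist (M m $ k $ l) (S $ k $ l) < \<epsilon>"
    using tendsto_vec_nth[OF tendsto_vec_nth[OF assms(1)]] \<open>0 < \<epsilon>\<close> by (simp add: tendsto_iff)
  then show "\<forall>\<^sub>F m in sequentially. \<bar>M m $ k $ l - S $ k $ l\<bar> \<le> \<epsilon>"
    by eventually_elim (simp add: dist_real_def)
qed

lemma eventually_entries_half_lower:
  fixes M :: "nat \<Rightarrow> real^'k::finite^'k"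
  assumes "M \<longlonglongrightarrow> S" and "\<And>k l. 0 \<le> S $ k $ l"
  shows "\<forall>\<^sub>F m in sequentially. \<forall>k l. S $ k $ l \<noteq> 0 \<longrightarrow> S $ k $ l / 2 \<le> M m $ k $ l"
proof (intro eventually_all_finite)
  fix k l
  show "\<forall>\<^sub>F m in sequentially. S $ k $ l \<noteq> 0 \<longrightarrow> S $ k $ l / 2 \<le> M m $ k $ l"
  proof (cases "S $ k $ l = 0")
    case False
    then have "S $ k $ l / 2 < S $ k $ l"
      using assms(2)[of k l] by simp
    from order_tendstoD(1)[OF tendsto_vec_nth[OF tendsto_vec_nth[OF assms(1)]] this]
    show ?thesis
      by eventually_elim simp
  qed simp
qed

lemma eventually_vstar_uniformly_separated_bounded:
  fixes n p :: "nat \<Rightarrow> nat"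
    and A :: "nat \<Rightarrow> nat \<Rightarrow> 'd::{finite,linorder} option \<Rightarrow> real"
    and W :: "nat \<Rightarrow> 'd option \<Rightarrow> nat \<Rightarrow> real"
    and Sigma0 :: "real^'d option^'d option"
  assumes lim_n: "filterlim n at_top sequentially"
    and model: "\<And>m. plsi_model (p m) (n m) (A m) (W m)"
    and S0_nonneg: "\<And>k l. 0 \<le> Sigma0 $ k $ l"
    and S0_inv: "invertible Sigma0"
    and S0_irr: "irreducible_mat Sigma0"
    and beta_pos: "\<And>q. 0 < beta q"
    and SA_lim: "(\<lambda>m. (1 / beta (p m)) *\<^sub>R Sigma_A (p m) (A m)) \<longlonglongrightarrow> Sigma0"
    and "0 < c1" and SW_min: "\<And>m. lambda_min_ge (Sigma_W (n m) (W m)) c1"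
  shows "\<exists>\<sigma>>0. \<exists>B. \<forall>\<^sub>F m in sequentially. \<forall>Xi s V. pop_simplex_data (p m) (n m) (A m) (W m) Xi s V \<longrightarrow>
    affinely_separated \<sigma> (vstar V) \<and> (\<forall>k. norm (vstar V k) \<le> B)"
proof -
  obtain a where "0 < a" and coercive: "\<And>v. a * (norm v)\<^sup>2 \<le> quad_form Sigma0 v"
    using psd_invertible_imp_coercive[OF limit_Sigma_A_symmetric_psd[OF SA_lim beta_pos] S0_inv]
    by blast
  define \<epsilon> where "\<epsilon> = min 1 (a / (2 * (real CARD('d option))\<^sup>2))"
  have "0 < \<epsilon>"
    using \<open>0 < a\<close> by (simp add: \<epsilon>_def)
  have "\<forall>\<^sub>F m in sequentially. 1 \<le> n m"
    using lim_n by (simp add: filterlim_at_top)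
  with eventually_entries_close[OF SA_lim \<open>0 < \<epsilon>\<close>] eventually_entries_half_lower[OF SA_lim S0_nonneg]
  have "\<forall>\<^sub>F m in sequentially. \<forall>Xi s V. pop_simplex_data (p m) (n m) (A m) (W m) Xi s V \<longrightarrow>
    affinely_separated ((a/2) / entry_bound Sigma0) (vstar V) \<and>
    (\<forall>k. norm (vstar V k) \<le>
       harnack_const Sigma0 c1 * sqrt (real CARD('d option) * entry_bound Sigma0 / (a/2)))"
  proof eventually_elim
    case (elim m)
    have "\<epsilon> \<le> 1" "\<epsilon> \<le> a / (2 * (real CARD('d option))\<^sup>2)"
      by (simp_all add: \<epsilon>_def)
    note bounds = plsi_vstar_separated_bounded[OF model _ beta_pos elim(3) SW_min \<open>0 < c1\<close> _ this _
        \<open>0 < a\<close> coercive S0_nonneg S0_irr]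
    show ?case
      using bounds elim(1,2) by blast
  qed
  moreover have "0 < (a/2) / entry_bound Sigma0"
    using \<open>0 < a\<close> entry_bound_pos[of Sigma0] by simp
  ultimately show ?thesis
    by blast
qed

lemma simplex_bounds_of_affinely_separated:
  fixes \<sigma> B :: real
  assumes "0 < \<sigma>"
  shows "\<exists>C1 C2. 1 < C1 \<and> 1 < C2 \<and>
    (\<forall>vs :: 'd::finite option \<Rightarrow> real^'d. affinely_separated \<sigma> vs \<and> (\<forall>k. norm (vs k) \<le> B) \<longrightarrow>
      (\<forall>k l. k \<noteq> l \<longrightarrow> 1 / C1 \<le> norm (vs k - vs l) \<and> norm (vs k - vs l) \<le> C1) \<and>
      1 / C2 \<le> measure lborel (convex hull (range vs)) \<and>
      measure lborel (convex hull (range vs)) \<le> C2)"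
proof -
  define vol where "vol = measure lborel (ball (0::real^'d) (\<sigma> / (real CARD('d option))\<^sup>2))"
  have "0 < vol"
    unfolding vol_def using content_ball_pos \<open>0 < \<sigma>\<close> by simp
  define C1 where "C1 = max 2 (max (1 / \<sigma>) (2 * B))"
  define C2 where "C2 = max 2 (max (measure lborel (cball (0::real^'d) B)) (1 / vol))"
  have "1 / C1 \<le> 1 / (1 / \<sigma>)" "1 / C2 \<le> 1 / (1 / vol)"
    unfolding C1_def C2_def using \<open>0 < \<sigma>\<close> \<open>0 < vol\<close> by (intro divide_left_mono; simp)+
  then have "1 / C1 \<le> \<sigma>" "1 / C2 \<le> vol"
    by simp_all
  have "(\<forall>k l. k \<noteq> l \<longrightarrow> 1 / C1 \<le> norm (vs k - vs l) \<and> norm (vs k - vs l) \<le> C1) \<and>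
      1 / C2 \<le> measure lborel (convex hull (range vs)) \<and>
      measure lborel (convex hull (range vs)) \<le> C2"
    if sep: "affinely_separated \<sigma> vs" and bnd: "\<And>k. norm (vs k) \<le> B" for vs :: "'d option \<Rightarrow> real^'d"
  proof (intro conjI allI impI)
    fix k l :: "'d option" assume "k \<noteq> l"
    show "1 / C1 \<le> norm (vs k - vs l)"
      using affinely_separated_norm_diff_ge[OF sep _ \<open>k \<noteq> l\<close>] \<open>0 < \<sigma>\<close> \<open>1 / C1 \<le> \<sigma>\<close> by simp
    show "norm (vs k - vs l) \<le> C1"
      using norm_triangle_ineq4[of "vs k" "vs l"] bnd[of k] bnd[of l] by (simp add: C1_def)
  next
    show "1 / C2 \<le> measure lborel (convex hull (range vs))"
      using affinely_separated_measure_convex_hull_ge[OF sep \<open>0 < \<sigma>\<close>] \<open>1 / C2 \<le> vol\<close>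
      by (simp add: vol_def)
    show "measure lborel (convex hull (range vs)) \<le> C2"
      using measure_convex_hull_le_cball[of vs B] bnd by (simp add: C2_def)
  qed
  moreover have "1 < C1" "1 < C2"
    by (simp_all add: C1_def C2_def)
  ultimately show ?thesis
    by blast
qed

theorem lemma3:
  fixes n p N :: "nat \<Rightarrow> nat"
    and A :: "nat \<Rightarrow> nat \<Rightarrow> 'd::{finite,linorder} option \<Rightarrow> real"
    and W :: "nat \<Rightarrow> 'd option \<Rightarrow> nat \<Rightarrow> real"
    and Sigma0 :: "real^'d option^'d option"
    and beta :: "nat \<Rightarrow> real"
    and c1 c2 :: real
  assumes lim_n: "filterlim n at_top sequentially"
    and lim_p: "filterlim p at_top sequentially"
    and lim_N: "filterlim N at_top sequentially"
    and model: "\<And>m. plsi_model (p m) (n m) (A m) (W m)"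
    and S0_nonneg: "\<And>k l. 0 \<le> Sigma0 $ k $ l"
    and S0_inv: "invertible Sigma0"
    and S0_irr: "irreducible_mat Sigma0"
    and beta_pos: "\<And>q. 0 < beta q"
    and SA_lim: "(\<lambda>m. (1 / beta (p m)) *\<^sub>R Sigma_A (p m) (A m)) \<longlonglongrightarrow> Sigma0"
    and c1_pos: "0 < c1" and c2_pos: "0 < c2"
    and SW_min: "\<And>m. lambda_min_ge (Sigma_W (n m) (W m)) c1"
    and SW_gap: "\<And>m. eig_gap_ge (mat_sqrt Sigma0 ** Sigma_W (n m) (W m) ** mat_sqrt Sigma0) c2"
  shows "\<exists>C1 C2. 1 < C1 \<and> 1 < C2 \<and>
    (\<forall>\<^sub>F m in sequentially. \<forall>Xi s V. pop_simplex_data (p m) (n m) (A m) (W m) Xi s V \<longrightarrow>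
        (\<forall>k l. k \<noteq> l \<longrightarrow> 1 / C1 \<le> norm (vstar V k - vstar V l) \<and> norm (vstar V k - vstar V l) \<le> C1) \<and>
        1 / C2 \<le> measure lborel (convex hull (range (vstar V))) \<and>
        measure lborel (convex hull (range (vstar V))) \<le> C2)"
proof -
  obtain \<sigma> B where "0 < \<sigma>" and uniform: "\<forall>\<^sub>F m in sequentially. \<forall>Xi s V.
      pop_simplex_data (p m) (n m) (A m) (W m) Xi s V \<longrightarrow>
      affinely_separated \<sigma> (vstar V) \<and> (\<forall>k. norm (vstar V k) \<le> B)"
    using eventually_vstar_uniformly_separated_bounded[OF lim_n model S0_nonneg S0_inv S0_irr
        beta_pos SA_lim c1_pos SW_min] by blast
  obtain C1 C2 where "1 < C1" "1 < C2" and bounds: "\<forall>vs :: 'd option \<Rightarrow> (real, 'd) vec.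
      affinely_separated \<sigma> vs \<and> (\<forall>k. norm (vs k) \<le> B) \<longrightarrow>
      (\<forall>k l. k \<noteq> l \<longrightarrow> 1 / C1 \<le> norm (vs k - vs l) \<and> norm (vs k - vs l) \<le> C1) \<and>
      1 / C2 \<le> measure lborel (convex hull (range vs)) \<and>
      measure lborel (convex hull (range vs)) \<le> C2"
    using simplex_bounds_of_affinely_separated[OF \<open>0 < \<sigma>\<close>, of B] by blast
  from uniform have "\<forall>\<^sub>F m in sequentially. \<forall>Xi s V. pop_simplex_data (p m) (n m) (A m) (W m) Xi s V \<longrightarrow>
      (\<forall>k l. k \<noteq> l \<longrightarrow> 1 / C1 \<le> norm (vstar V k - vstar V l) \<and> norm (vstar V k - vstar V l) \<le> C1) \<and>
      1 / C2 \<le> measure lborel (convex hull (range (vstar V))) \<and>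
      measure lborel (convex hull (range (vstar V))) \<le> C2"
    by eventually_elim (use bounds in blast)
  with \<open>1 < C1\<close> \<open>1 < C2\<close> show ?thesis
    by blast
qed

end
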